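(* Let $n>2$, $V=\mathbb{F}_2^n$, and let $M$ be any maximal subgroup of the translation group $T$. Then $C_{\mathrm{Sym}(V)}(M)<\mathrm{AGL}(V)$, and $|C_{\mathrm{Sym}(V)}(M)|=2^{2n-1}$.
   Context: $T=\{\sigma_v: v\in V\}\le\mathrm{Sym}(V)$ is the group of translations $\sigma_v:x\mapsto x+v$. $\mathrm{AGL}(V)=T\rtimes\mathrm{GL}(V)$ is the affine group, the group of maps $x\mapsto xL+v$ with $L\in\mathrm{GL}(V)$, $v\in V$; it equals the normaliser of $T$ in $\mathrm{Sym}(V)$. *)

theory Defs
  imports "HOL-Analysis.Analysis" "HOL-Library.Z2" "HOL-Algebra.Bij"
begin

text \<open>V = F_2^n is modelled as the type bit ^ 'n, with n = CARD('n).
  Sym(V) is the group BijGroup UNIV of all bijections of V (composition).\<close>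

definition Sym_V :: "('a \<Rightarrow> 'a) monoid" where
  "Sym_V = BijGroup UNIV"

definition transl_group :: "((bit ^ 'n) \<Rightarrow> (bit ^ 'n)) set" where
  "transl_group = {(\<lambda>x. x + v) | v. True}"

definition GL_V :: "((bit ^ 'n) \<Rightarrow> (bit ^ 'n)) set" where
  "GL_V = {L. Vector_Spaces.linear (*s) (*s) L \<and> bij L}"

definition AGL_V :: "((bit ^ 'n) \<Rightarrow> (bit ^ 'n)) set" where
  "AGL_V = {(\<lambda>x. L x + v) | L v. L \<in> GL_V}"

definition maximal_subgroup_of :: "'a set \<Rightarrow> 'a set \<Rightarrow> ('a, 'b) monoid_scheme \<Rightarrow> bool" where
  "maximal_subgroup_of M H G \<longleftrightarrow>
     subgroup M G \<and> M \<subseteq> H \<and> M \<noteq> H \<and>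
     (\<forall>K. subgroup K G \<and> M \<subseteq> K \<and> K \<subseteq> H \<longrightarrow> K = M \<or> K = H)"

definition centraliser :: "('a, 'b) monoid_scheme \<Rightarrow> 'a set \<Rightarrow> 'a set" where
  "centraliser G S = {g \<in> carrier G. \<forall>s\<in>S. g \<otimes>\<^bsub>G\<^esub> s = s \<otimes>\<^bsub>G\<^esub> g}"

end

theory Submission
  imports Defs
begin

text \<open>
  The subgroups of T correspond to the F_2-subspaces of V, so a maximal subgroup M is the
  translation group of a hyperplane W; fix e \<notin> W. A permutation g centralises M iff
  g (x + w) = g x + w for all w \<in> W, and such a g is determined by a = g 0 and by
  d = g e + a + e, which must lie in W for g to be injective. Hence the centraliser consists
  exactly of the maps x \<mapsto> \<tau>_d x + a with a \<in> V and d \<in> W, where \<tau>_d is the transvection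
  fixing W pointwise and sending x \<notin> W to x + d. These maps are affine and there are
  2^n \<cdot> |W| = 2^(2n-1) of them. For n \<ge> 2 some linear transvection moves a nonzero vector of W,
  so it lies in AGL(V) but not in the centraliser.
\<close>

lemma bitvec_add_self [simp]: "(x::bit^'n) + x = 0"
  by (simp add: vec_eq_iff)

lemma bitvec_add_self_left [simp]: "(x::bit^'n) + (x + y) = y"
  by (simp add: add.assoc[symmetric])

lemma bitvec_minus_eq_add: "(x::bit^'n) - y = x + y"
  by (metis add_diff_cancel_right' bitvec_add_self_left add.commute)

lemma card_UNIV_bit [simp]: "CARD(bit) = 2"
  by (metis type_definition.card type_definition_bit card_UNIV_bool)

lemma card_UNIV_bitvec: "card (UNIV :: (bit^'n) set) = 2 ^ CARD('n)"
  by (simp add: CARD_vec card_UNIV_bit)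

lemma finite_UNIV_bitvec [simp]: "finite (UNIV :: (bit^'n) set)"
  by (rule card_ge_0_finite) (simp add: card_UNIV_bitvec)

lemma bitvec_subspace_iff:
  "vec.subspace (W :: (bit^'n) set) \<longleftrightarrow> 0 \<in> W \<and> (\<forall>x\<in>W. \<forall>y\<in>W. x + y \<in> W)"
proof -
  have "c *s x \<in> W" if "0 \<in> W" "x \<in> W" for c :: bit and x :: "bit^'n"
    using that by (cases c) simp_all
  then show ?thesis
    by (auto simp: vec.subspace_def)
qed

lemma carrier_Sym_V: "carrier Sym_V = {f. bij f}"
  by (auto simp: Sym_V_def BijGroup_def Bij_def extensional_def)

lemma mult_Sym_V: "bij f \<Longrightarrow> bij g \<Longrightarrow> f \<otimes>\<^bsub>Sym_V\<^esub> g = f \<circ> g"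
  by (auto simp: Sym_V_def BijGroup_def Bij_def compose_def fun_eq_iff)

lemma one_Sym_V: "\<one>\<^bsub>Sym_V\<^esub> = id"
  by (auto simp: Sym_V_def BijGroup_def fun_eq_iff)

lemma group_Sym_V: "group Sym_V"
  by (simp add: Sym_V_def group_BijGroup)

definition transl :: "'a::plus \<Rightarrow> 'a \<Rightarrow> 'a" where
  "transl v = (\<lambda>x. x + v)"

lemma bij_transl: "bij (transl (v::'a::group_add))"
  by (rule o_bij[of "transl (- v)"]) (auto simp: transl_def fun_eq_iff add.assoc)

lemma transl_comp: "transl a \<circ> transl b = transl (b + (a::'a::semigroup_add))"
  by (simp add: transl_def fun_eq_iff add.assoc)

lemma transl_zero: "transl 0 = (id :: 'a::monoid_add \<Rightarrow> 'a)"
  by (simp add: transl_def fun_eq_iff)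

lemma inj_transl: "inj (transl :: 'a::cancel_semigroup_add \<Rightarrow> 'a \<Rightarrow> 'a)"
proof (rule injI)
  fix a b :: 'a
  assume "transl a = transl b"
  then have "transl a a = transl b a" by simp
  then show "a = b" by (simp add: transl_def)
qed

lemma transl_group_eq_range: "transl_group = range transl"
  by (auto simp: transl_group_def transl_def)

lemma centraliser_transl_image:
  "centraliser Sym_V (transl ` W) = {g. bij g \<and> (\<forall>w\<in>W. \<forall>x. g (x + w) = g x + (w::'a::group_add))}"
proof -
  have "g \<otimes>\<^bsub>Sym_V\<^esub> transl w = transl w \<otimes>\<^bsub>Sym_V\<^esub> g \<longleftrightarrow> (\<forall>x. g (x + w) = g x + w)"
    if "bij g" for g and w :: 'a
    using that by (simp add: mult_Sym_V bij_transl) (simp add: fun_eq_iff transl_def)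
  then show ?thesis
    by (auto simp: centraliser_def carrier_Sym_V)
qed

lemma centraliser_transl_image_apply:
  assumes "g \<in> centraliser Sym_V (transl ` W)" and "w \<in> W"
  shows "g w = g 0 + (w::'a::group_add)"
proof -
  have "g (0 + w) = g 0 + w"
    using assms unfolding centraliser_transl_image by blast
  then show ?thesis by simp
qed

lemma subgroup_transl_image:
  assumes "vec.subspace (W :: (bit^'n) set)"
  shows "subgroup (transl ` W) Sym_V"
proof (rule group.subgroupI[OF group_Sym_V])
  have closed: "a \<in> W \<Longrightarrow> b \<in> W \<Longrightarrow> a + b \<in> W" for a b
    using assms by (auto simp: bitvec_subspace_iff)
  show "transl ` W \<subseteq> carrier Sym_V" "transl ` W \<noteq> {}"
    using assms by (auto simp: carrier_Sym_V bij_transl bitvec_subspace_iff)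
  fix f assume "f \<in> transl ` W"
  then obtain u where u: "u \<in> W" "f = transl u" by auto
  have "inv\<^bsub>Sym_V\<^esub> (transl u) = transl u"
    by (rule group.inv_equality[OF group_Sym_V])
       (simp_all add: mult_Sym_V bij_transl transl_comp transl_zero one_Sym_V carrier_Sym_V)
  then show "inv\<^bsub>Sym_V\<^esub> f \<in> transl ` W" using u by simp
  fix g assume "g \<in> transl ` W"
  with \<open>f \<in> transl ` W\<close> show "f \<otimes>\<^bsub>Sym_V\<^esub> g \<in> transl ` W"
    by (auto simp: mult_Sym_V bij_transl transl_comp closed)
qed

lemma subgroup_of_transl_group:
  assumes "subgroup M Sym_V" and "M \<subseteq> transl_group"
  defines "W \<equiv> {v :: bit^'n. transl v \<in> M}"
  shows "M = transl ` W" and "vec.subspace W"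
proof -
  show "M = transl ` W"
    using assms(2) by (auto simp: W_def transl_group_eq_range)
  have "0 \<in> W"
    using subgroup.one_closed[OF assms(1)] by (simp add: W_def one_Sym_V transl_zero)
  moreover have "a + b \<in> W" if "a \<in> W" "b \<in> W" for a b
    using subgroup.m_closed[OF assms(1), of "transl b" "transl a"] that
    by (simp add: W_def mult_Sym_V bij_transl transl_comp)
  ultimately show "vec.subspace W"
    by (simp add: bitvec_subspace_iff)
qed

lemma GL_V_subset_AGL_V: "GL_V \<subseteq> AGL_V"
  unfolding AGL_V_def by force

lemma GL_V_moves_nonzero:
  assumes "w \<noteq> (0 :: bit^'n)" and "2 \<le> CARD('n)"
  obtains L where "L \<in> GL_V" "L w \<noteq> w"
proof -
  obtain i where i: "w $ i = 1"
    using assms(1) by (auto simp: vec_eq_iff)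
  have "(UNIV :: 'n set) \<noteq> {i}"
  proof
    assume "UNIV = {i}"
    then have "CARD('n) = card {i}" by (simp only:)
    with assms(2) show False by simp
  qed
  then obtain j where j: "j \<noteq> i"
    by blast
  define u where "u = (axis j 1 :: bit^'n)"
  define L where "L x = x + (x $ i) *s u" for x :: "bit^'n"
  have ui: "u $ i = 0"
    using j by (simp add: u_def axis_def)
  have "L (x + y) = L x + L y" for x y
    by (simp only: L_def vector_add_component vec.scale_left_distrib) (simp add: add_ac)
  moreover have "L (c *s x) = c *s L x" for c x
    by (simp add: L_def vec.scale_right_distrib)
  ultimately have "Vector_Spaces.linear (*s) (*s) L"
    unfolding Vector_Spaces.linear_iff using vec.vector_space_axioms by blast
  moreover have "L (L x) = x" for x
    using ui by (simp add: L_def add.assoc)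
  then have "bij L"
    by (intro o_bij[of L L]) (auto simp: fun_eq_iff)
  moreover have "L w = w + u" "u \<noteq> 0"
    using i by (simp_all add: L_def u_def)
  then have "L w \<noteq> w"
    by simp
  ultimately show thesis
    using that by (auto simp: GL_V_def)
qed

locale bitvec_hyperplane =
  fixes W :: "(bit^'n) set" and e :: "bit^'n"
  assumes subspace: "vec.subspace W"
    and e_notin: "e \<notin> W"
    and covers: "v \<in> W \<or> v + e \<in> W"
begin

lemma zero_in: "0 \<in> W"
  using subspace by (simp add: bitvec_subspace_iff)

lemma add_in: "x \<in> W \<Longrightarrow> y \<in> W \<Longrightarrow> x + y \<in> W"
  using subspace by (simp add: bitvec_subspace_iff)

lemma add_in_iff: "y \<in> W \<Longrightarrow> x + y \<in> W \<longleftrightarrow> x \<in> W"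
  by (metis add_in add.commute bitvec_add_self_left)

lemma add_e_in_iff: "x + e \<in> W \<longleftrightarrow> x \<notin> W"
  using add_in_iff[of x e] covers[of x] e_notin by (metis add.commute)

lemma add_notin_in: "x \<notin> W \<Longrightarrow> y \<notin> W \<Longrightarrow> x + y \<in> W"
  using add_in[of "x + e" "y + e"] covers[of x] covers[of y] by (simp add: add_ac)

lemma card_eq: "card W = 2 ^ (CARD('n) - 1)"
proof -
  have "bij_betw (\<lambda>x. x + e) W (- W)"
    by (rule bij_betw_byWitness[where f' = "\<lambda>x. x + e"])
       (auto simp: add_e_in_iff add.assoc)
  then have "card (- W) = card W"
    by (simp add: bij_betw_same_card)
  moreover have "card W + card (- W) = 2 ^ CARD('n)"
    using card_Un_disjoint[of W "- W"] finite_subset[OF subset_UNIV finite_UNIV_bitvec, of W]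
    by (simp add: card_UNIV_bitvec)
  moreover have "(2::nat) ^ CARD('n) = 2 * 2 ^ (CARD('n) - 1)"
    by (metis power_Suc Suc_pred' finite_UNIV_card_ge_0 finite_class.finite_UNIV)
  ultimately show ?thesis by simp
qed

definition transvection :: "bit^'n \<Rightarrow> bit^'n \<Rightarrow> bit^'n" where
  "transvection d x = (if x \<in> W then x else x + d)"

lemma transvection_add:
  assumes "x \<in> W \<or> y \<in> W"
  shows "transvection d (x + y) = transvection d x + transvection d y"
proof (cases "x \<in> W")
  case True
  then show ?thesis
    using add_in_iff[of x y] by (simp add: transvection_def add.commute add.assoc)
next
  case False
  moreover have "x + y + d = x + d + y"
    by (simp add: add_ac)
  ultimately show ?thesis
    using assms add_in_iff[of y x] by (simp add: transvection_def)
qed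

lemma transvection_in_GL_V:
  assumes "d \<in> W"
  shows "transvection d \<in> GL_V"
proof -
  have "transvection d (x + y) = transvection d x + transvection d y" for x y
    using transvection_add add_notin_in[of x y]
    by (cases "x \<in> W \<or> y \<in> W") (auto simp: transvection_def add_ac)
  moreover have "transvection d (c *s x) = c *s transvection d x" for c x
    using zero_in by (cases c) (simp_all add: transvection_def)
  ultimately have "Vector_Spaces.linear (*s) (*s) (transvection d)"
    unfolding Vector_Spaces.linear_iff using vec.vector_space_axioms by blast
  moreover have "transvection d (transvection d x) = x" for x
    using assms add_in_iff[of d x] by (simp add: transvection_def add.assoc)
  then have "bij (transvection d)"
    by (intro o_bij[of "transvection d"]) (auto simp: fun_eq_iff)
  ultimately show ?thesis by (simp add: GL_V_def)
qed

definition centralising_map :: "bit^'n \<Rightarrow> bit^'n \<Rightarrow> bit^'n \<Rightarrow> bit^'n" where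
  "centralising_map d a x = transvection d x + a"

lemma centralising_map_in_AGL_V: "d \<in> W \<Longrightarrow> centralising_map d a \<in> AGL_V"
  using transvection_in_GL_V unfolding AGL_V_def centralising_map_def by blast

lemma transvection_fixes: "w \<in> W \<Longrightarrow> transvection d w = w"
  by (simp add: transvection_def)

lemma centralising_map_in_centraliser:
  assumes "d \<in> W"
  shows "centralising_map d a \<in> centraliser Sym_V (transl ` W)"
proof -
  have "bij (transvection d)"
    using transvection_in_GL_V[OF assms] by (simp add: GL_V_def)
  then have "bij (transl a \<circ> transvection d)"
    by (rule bij_comp) (rule bij_transl)
  moreover have "transl a \<circ> transvection d = centralising_map d a"
    by (simp add: fun_eq_iff transl_def centralising_map_def)
  moreover have "centralising_map d a (x + w) = centralising_map d a x + w" if "w \<in> W" for w x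
    using that by (simp add: centralising_map_def transvection_add transvection_fixes add_ac)
  ultimately show ?thesis
    by (simp add: centraliser_transl_image)
qed

text \<open>Injectivity of g forces d = g e + g 0 + e into W: otherwise w = g e + g 0 \<in> W and
  g w = g 0 + w = g e, i.e. e = w \<in> W.\<close>

lemma centraliser_element_eq:
  assumes "g \<in> centraliser Sym_V (transl ` W)"
  obtains d where "d \<in> W" "g = centralising_map d (g 0)"
proof -
  from assms have "bij g" and shift: "\<And>w x. w \<in> W \<Longrightarrow> g (x + w) = g x + w"
    by (auto simp: centraliser_transl_image)
  define d where "d = g e + g 0 + e"
  have "d \<in> W"
  proof (rule ccontr)
    assume "d \<notin> W"
    then have w: "g e + g 0 \<in> W"
      using add_e_in_iff[of "g e + g 0"] by (simp add: d_def)
    have "g (g e + g 0) = g e"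
      using shift[OF w, of 0] by (simp add: add.commute)
    then have "g e + g 0 = e"
      using \<open>bij g\<close> by (simp add: bij_def inj_eq)
    with w e_notin show False by simp
  qed
  moreover have "g x = centralising_map d (g 0) x" for x
  proof (cases "x \<in> W")
    case True
    then show ?thesis
      using shift[of x 0] by (simp add: centralising_map_def transvection_def add.commute)
  next
    case False
    then have "g (e + (x + e)) = g e + (x + e)"
      using shift[of "x + e" e] add_e_in_iff[of x] by simp
    with False show ?thesis
      by (simp add: centralising_map_def transvection_def d_def add_ac)
  qed
  ultimately show thesis
    using that by blast
qed

lemma centraliser_eq:
  "centraliser Sym_V (transl ` W) = (\<lambda>(d, a). centralising_map d a) ` (W \<times> UNIV)"
proof (intro equalityI subsetI)
  fix g assume "g \<in> centraliser Sym_V (transl ` W)"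
  then obtain d where "d \<in> W" and "g = centralising_map d (g 0)"
    by (rule centraliser_element_eq)
  then have "g = (\<lambda>(d, a). centralising_map d a) (d, g 0)" and "(d, g 0) \<in> W \<times> UNIV"
    by simp_all
  then show "g \<in> (\<lambda>(d, a). centralising_map d a) ` (W \<times> UNIV)"
    by (rule image_eqI)
qed (auto intro: centralising_map_in_centraliser)

lemma inj_on_centralising_map: "inj_on (\<lambda>(d, a). centralising_map d a) (W \<times> UNIV)"
proof (rule inj_onI, clarify)
  fix d a d' a' assume "centralising_map d a = centralising_map d' a'"
  then have "centralising_map d a 0 = centralising_map d' a' 0"
    and "centralising_map d a e = centralising_map d' a' e" by auto
  then show "d = d' \<and> a = a'"
    using zero_in e_notin by (simp add: centralising_map_def transvection_def)
qed

lemma card_centraliser: "card (centraliser Sym_V (transl ` W)) = 2 ^ (2 * CARD('n) - 1)"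
proof -
  have "card (centraliser Sym_V (transl ` W)) = card W * 2 ^ CARD('n)"
    by (simp add: centraliser_eq card_image[OF inj_on_centralising_map] card_cartesian_product
        card_UNIV_bitvec)
  also have "\<dots> = 2 ^ (CARD('n) - 1 + CARD('n))"
    by (simp only: card_eq power_add)
  also have "CARD('n) - 1 + CARD('n) = 2 * CARD('n) - 1"
    using zero_less_card_finite[where 'a='n] by simp
  finally show ?thesis .
qed

lemma centraliser_subset_AGL_V: "centraliser Sym_V (transl ` W) \<subseteq> AGL_V"
  unfolding centraliser_eq by (auto intro: centralising_map_in_AGL_V)

end

text \<open>A maximal subgroup of T has index 2, since W + \<langle>v\<rangle> lies strictly between M and T
  whenever neither v nor v + e lies in W.\<close>

lemma maximal_subgroup_transl_group:
  fixes M :: "(bit^'n \<Rightarrow> bit^'n) set"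
  assumes "maximal_subgroup_of M transl_group Sym_V"
  obtains W e where "bitvec_hyperplane W e" "M = transl ` W"
proof -
  define W where "W = {v :: bit^'n. transl v \<in> M}"
  from assms have M: "subgroup M Sym_V" "M \<subseteq> transl_group" "M \<noteq> transl_group"
    and maximal: "\<And>K. subgroup K Sym_V \<Longrightarrow> M \<subseteq> K \<Longrightarrow> K \<subseteq> transl_group \<Longrightarrow> K = M \<or> K = transl_group"
    unfolding maximal_subgroup_of_def by auto
  have MW: "M = transl ` W" and W: "vec.subspace W"
    using subgroup_of_transl_group[OF M(1,2)] by (simp_all add: W_def)
  obtain e where e: "e \<notin> W"
    using M(3) by (auto simp: MW transl_group_eq_range)
  have cover: "v \<in> W \<or> v + e \<in> W" for v
  proof (rule ccontr)
    assume v: "\<not> (v \<in> W \<or> v + e \<in> W)"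
    let ?K = "transl ` vec.span (insert v W)"
    have "M \<subseteq> ?K"
      using MW vec.span_superset by blast
    moreover have "transl v \<in> ?K" "transl v \<notin> M"
      using v vec.span_superset[of "insert v W"] by (auto simp: MW inj_image_mem_iff[OF inj_transl])
    moreover have "subgroup ?K Sym_V"
      by (rule subgroup_transl_image[OF vec.subspace_span])
    moreover have "?K \<subseteq> transl_group"
      by (auto simp: transl_group_eq_range)
    ultimately have "?K = transl_group"
      using maximal by blast
    then have "transl e \<in> ?K"
      by (simp add: transl_group_eq_range)
    then have "e \<in> vec.span (insert v W)"
      by (simp only: inj_image_mem_iff[OF inj_transl])
    then obtain k where "e - k *s v \<in> W"
      using W by (auto simp: vec.span_insert vec.span_eq_iff[THEN iffD2])
    then show False
      using v e by (cases k) (simp_all add: bitvec_minus_eq_add add.commute)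
  qed
  have "bitvec_hyperplane W e"
    by (rule bitvec_hyperplane.intro[OF W e cover])
  with MW that show thesis
    by blast
qed

theorem mainTheorem5:
  fixes M :: "((bit ^ 'n) \<Rightarrow> (bit ^ 'n)) set"
  assumes "CARD('n) > 2"
    and "maximal_subgroup_of M transl_group Sym_V"
  shows "centraliser Sym_V M \<subset> AGL_V
    \<and> card (centraliser Sym_V M) = 2 ^ (2 * CARD('n) - 1)"
proof -
  obtain W e where H: "bitvec_hyperplane W e" and M: "M = transl ` W"
    using maximal_subgroup_transl_group[OF assms(2)] by blast
  interpret bitvec_hyperplane W e by (fact H)
  have "(2::nat) ^ 1 \<le> 2 ^ (CARD('n) - 1)"
    using assms(1) by (intro power_increasing) simp_all
  then have "W \<noteq> {0}"
    using card_eq by auto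
  then obtain w where "w \<in> W" "w \<noteq> 0"
    using zero_in by blast
  obtain L where L: "L \<in> GL_V" "L w \<noteq> w"
    using GL_V_moves_nonzero[OF \<open>w \<noteq> 0\<close>] assms(1) by force
  then have "L 0 = 0"
    using vec.linear_0 by (auto simp: GL_V_def)
  then have "L \<notin> centraliser Sym_V M"
    using L(2) centraliser_transl_image_apply[of L W w] \<open>w \<in> W\<close> by (auto simp: M)
  then show ?thesis
    using L(1) GL_V_subset_AGL_V centraliser_subset_AGL_V card_centraliser by (auto simp: M)
qed

end
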